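(* Let $x_1,x_2,\dots$ be i.i.d. random variables with values in $[-R,R]$, $\beta>0$, $\hat\rho_n=\frac1\beta\ln\big(\frac1n\sum_{t=1}^n\exp(\beta x_t)\big)$, and $\mu=\lim_{n\to\infty}\mathbb{E}[\hat\rho_n]=\frac1\beta\ln\mathbb{E}[\exp(\beta x_1)]$. Then there exist constants $\theta>1$, $\xi>1$ and $1/2\le\eta<1$ such that for any $z\ge1$ and $n\in\mathbb{N}$, $$\mathbb{P}[n\hat\rho_n-n\mu\ge n^\eta z]\le\frac{\theta}{z^\xi},\qquad \mathbb{P}[n\hat\rho_n-n\mu\le -n^\eta z]\le\frac{\theta}{z^\xi}.$$ *)

theory Defs
  imports "HOL-Probability.Probability"
begin

text \<open>Empirical entropic risk estimator
  rho_hat_n = (1/beta) ln((1/n) sum_{t=1}^n exp(beta x_t)); the sequence is indexed from 0,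
  so x_1,...,x_n correspond to X 0, ..., X (n-1).\<close>
definition rho_hat :: "real \<Rightarrow> (nat \<Rightarrow> 'a \<Rightarrow> real) \<Rightarrow> nat \<Rightarrow> 'a \<Rightarrow> real" where
  "rho_hat \<beta> X n \<omega> = (1 / \<beta>) * ln ((1 / real n) * (\<Sum>t<n. exp (\<beta> * X t \<omega>)))"

end

theory Submission
  imports Defs
begin

text \<open>
  Put \<open>m = E[exp (\<beta> x\<^sub>1)]\<close> and \<open>S\<^sub>n = \<Sum>\<^sub>t exp (\<beta> x\<^sub>t)\<close>. Then
  \<open>n \<rho>\<^sub>n - n \<mu> = (n / \<beta>) ln (S\<^sub>n / (n m))\<close>, and the elementary bounds
  \<open>1 - 1/t \<le> ln t \<le> t - 1\<close> turn a deviation of size \<open>\<surd>n z\<close> of this quantity into a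
  deviation of order \<open>\<surd>n z\<close> of \<open>S\<^sub>n\<close> from its mean \<open>n m\<close>. The summands
  \<open>exp (\<beta> x\<^sub>t)\<close> are i.i.d. with values in a compact interval of positive reals, so
  Hoeffding's inequality bounds the probability of such a deviation by \<open>exp (- c z\<^sup>2) \<le> \<theta> / z\<^sup>2\<close>.
  Hence \<open>\<eta> = 1/2\<close> and \<open>\<xi> = 2\<close> work.
\<close>

lemma ln_div_ge_imp_ge:
  fixes S N d :: real
  assumes "0 < S" "0 < N" "d \<le> ln (S / N)"
  shows "N + N * d \<le> S"
proof -
  have "d \<le> S / N - 1"
    using assms(3) ln_le_minus_one[of "S / N"] assms(1,2) by simp
  then show ?thesis
    using assms(2) by (simp add: field_simps)
qed

lemma ln_div_le_imp_le:
  fixes S N d :: real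
  assumes "0 < S" "0 < N" "ln (S / N) \<le> - d"
  shows "S + S * d \<le> N"
proof -
  have "ln (N / S) \<le> N / S - 1"
    using assms(1,2) by (intro ln_le_minus_one) simp
  moreover have "ln (N / S) = - ln (S / N)"
    using assms(1,2) by (simp add: ln_div)
  ultimately have "d \<le> N / S - 1"
    using assms(3) by linarith
  then show ?thesis
    using assms(1) by (simp add: field_simps)
qed

lemma exp_neg_le_inverse:
  fixes x :: real
  assumes "0 < x"
  shows "exp (- x) \<le> 1 / x"
proof -
  have "x \<le> exp x"
    using exp_ge_add_one_self[of x] by linarith
  then show ?thesis
    using assms by (simp add: exp_minus field_simps)
qed

context Hoeffding_ineq_iid
begin

lemma lower_le_expectation: "a \<le> \<mu>"
proof -
  interpret Y: interval_bounded_random_variable M Y a b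
    by unfold_locales (fact rv_Y, fact AE_in_interval)
  have "expectation (\<lambda>_. a) \<le> expectation Y"
    by (intro integral_mono_AE eventually_mono[OF AE_in_interval]) auto
  then show ?thesis
    by (simp add: \<mu>_def prob_space)
qed

lemma AE_sum_ge_lower: "AE x in M. real (card I) * a \<le> (\<Sum>i\<in>I. X i x)"
proof -
  have "AE x in M. \<forall>i\<in>I. X i x \<in> {a..b}"
    by (intro AE_finite_allI[OF fin] X.AE_in_interval)
  then show ?thesis
    by eventually_elim (use sum_mono[of I "\<lambda>_. a"] in auto)
qed

lemma prob_ln_mean_ratio_ge:
  assumes "0 < a" "a < b" "I \<noteq> {}" "0 \<le> \<epsilon>"
  defines "n \<equiv> card I"
  shows "prob {x \<in> space M. \<epsilon> \<le> sqrt n * ln ((\<Sum>i\<in>I. X i x) / (n * \<mu>))}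
           \<le> exp (- 2 * \<mu>\<^sup>2 * \<epsilon>\<^sup>2 / (b - a)\<^sup>2)"
proof -
  have n: "0 < n" and \<mu>: "0 < \<mu>"
    using assms(1,3) fin lower_le_expectation by (auto simp: n_def card_gt_0_iff)
  have "AE x in M. \<epsilon> \<le> sqrt n * ln ((\<Sum>i\<in>I. X i x) / (n * \<mu>))
          \<longrightarrow> n * \<mu> + sqrt n * \<mu> * \<epsilon> \<le> (\<Sum>i\<in>I. X i x)"
    using AE_sum_ge_lower
  proof eventually_elim
    case (elim x)
    show ?case
    proof
      assume "\<epsilon> \<le> sqrt n * ln ((\<Sum>i\<in>I. X i x) / (n * \<mu>))"
      then have "\<epsilon> / sqrt n \<le> ln ((\<Sum>i\<in>I. X i x) / (n * \<mu>))"
        using n by (simp add: divide_le_eq mult.commute)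
      moreover have "0 < (\<Sum>i\<in>I. X i x)"
        using elim mult_pos_pos[OF _ assms(1), of "real n"] n unfolding n_def by linarith
      ultimately have "n * \<mu> + n * \<mu> * (\<epsilon> / sqrt n) \<le> (\<Sum>i\<in>I. X i x)"
        using n \<mu> by (intro ln_div_ge_imp_ge) auto
      moreover have "n * \<mu> * (\<epsilon> / sqrt n) = sqrt n * \<mu> * \<epsilon>"
        using n by (simp add: field_simps real_sqrt_mult_self)
      ultimately show "n * \<mu> + sqrt n * \<mu> * \<epsilon> \<le> (\<Sum>i\<in>I. X i x)"
        by simp
    qed
  qed
  then have "prob {x \<in> space M. \<epsilon> \<le> sqrt n * ln ((\<Sum>i\<in>I. X i x) / (n * \<mu>))}
      \<le> prob {x \<in> space M. (\<Sum>i\<in>I. X i x) \<ge> n * \<mu> + sqrt n * \<mu> * \<epsilon>}"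
    by (intro finite_measure_mono_AE) auto
  also have "\<dots> \<le> exp (- 2 * (sqrt n * \<mu> * \<epsilon>)\<^sup>2 / (n * (b - a)\<^sup>2))"
    unfolding n_def using assms(2-4) \<mu> by (intro Hoeffding_ineq_ge) auto
  also have "\<dots> = exp (- 2 * \<mu>\<^sup>2 * \<epsilon>\<^sup>2 / (b - a)\<^sup>2)"
    using n by (simp add: power_mult_distrib)
  finally show ?thesis .
qed

lemma prob_ln_mean_ratio_le:
  assumes "0 < a" "a < b" "I \<noteq> {}" "0 \<le> \<epsilon>"
  defines "n \<equiv> card I"
  shows "prob {x \<in> space M. sqrt n * ln ((\<Sum>i\<in>I. X i x) / (n * \<mu>)) \<le> - \<epsilon>}
           \<le> exp (- 2 * a\<^sup>2 * \<epsilon>\<^sup>2 / (b - a)\<^sup>2)"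
proof -
  have n: "0 < n" and \<mu>: "0 < \<mu>"
    using assms(1,3) fin lower_le_expectation by (auto simp: n_def card_gt_0_iff)
  have "AE x in M. sqrt n * ln ((\<Sum>i\<in>I. X i x) / (n * \<mu>)) \<le> - \<epsilon>
          \<longrightarrow> (\<Sum>i\<in>I. X i x) \<le> n * \<mu> - sqrt n * a * \<epsilon>"
    using AE_sum_ge_lower
  proof eventually_elim
    case (elim x)
    show ?case
    proof
      assume "sqrt n * ln ((\<Sum>i\<in>I. X i x) / (n * \<mu>)) \<le> - \<epsilon>"
      then have "ln ((\<Sum>i\<in>I. X i x) / (n * \<mu>)) \<le> - \<epsilon> / sqrt n"
        using divide_right_mono[of _ _ "sqrt n"] n by fastforce
      moreover have "0 < (\<Sum>i\<in>I. X i x)"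
        using elim mult_pos_pos[OF _ assms(1), of "real n"] n unfolding n_def by linarith
      ultimately have "(\<Sum>i\<in>I. X i x) + (\<Sum>i\<in>I. X i x) * (\<epsilon> / sqrt n) \<le> n * \<mu>"
        using n \<mu> by (intro ln_div_le_imp_le) (auto simp flip: minus_divide_left)
      moreover have "n * a * (\<epsilon> / sqrt n) \<le> (\<Sum>i\<in>I. X i x) * (\<epsilon> / sqrt n)"
        using elim assms(4) unfolding n_def by (intro mult_right_mono) auto
      moreover have "n * a * (\<epsilon> / sqrt n) = sqrt n * a * \<epsilon>"
        using n by (simp add: field_simps real_sqrt_mult_self)
      ultimately show "(\<Sum>i\<in>I. X i x) \<le> n * \<mu> - sqrt n * a * \<epsilon>"
        by linarith
    qed
  qed
  then have "prob {x \<in> space M. sqrt n * ln ((\<Sum>i\<in>I. X i x) / (n * \<mu>)) \<le> - \<epsilon>}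
      \<le> prob {x \<in> space M. (\<Sum>i\<in>I. X i x) \<le> n * \<mu> - sqrt n * a * \<epsilon>}"
    by (intro finite_measure_mono_AE) auto
  also have "\<dots> \<le> exp (- 2 * (sqrt n * a * \<epsilon>)\<^sup>2 / (n * (b - a)\<^sup>2))"
    unfolding n_def using assms(1-4) by (intro Hoeffding_ineq_le) auto
  also have "\<dots> = exp (- 2 * a\<^sup>2 * \<epsilon>\<^sup>2 / (b - a)\<^sup>2)"
    using n by (simp add: power_mult_distrib)
  finally show ?thesis .
qed

end


lemma distr_comp_eq:
  assumes "distr M N X = distr M N Y" "X \<in> M \<rightarrow>\<^sub>M N" "Y \<in> M \<rightarrow>\<^sub>M N" "f \<in> N \<rightarrow>\<^sub>M L"
  shows "distr M L (f \<circ> X) = distr M L (f \<circ> Y)"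
  by (metis assms distr_distr)

lemma (in prob_space) iid_interval_bounded_exp:
  fixes \<beta> R :: real
  assumes "finite I" and indep: "indep_vars (\<lambda>_. borel) X I"
    and ident: "\<And>i. i \<in> I \<Longrightarrow> distr M borel (X i) = distr M borel Z"
    and [measurable]: "random_variable borel Z"
    and bounded: "AE \<omega> in M. Z \<omega> \<in> {-R..R}" and "0 < \<beta>"
  shows "iid_interval_bounded_random_variables M I (\<lambda>i \<omega>. exp (\<beta> * X i \<omega>)) (\<lambda>\<omega>. exp (\<beta> * Z \<omega>))
           (exp (- \<beta> * (\<bar>R\<bar> + 1))) (exp (\<beta> * (\<bar>R\<bar> + 1)))"
proof unfold_locales
  show "indep_vars (\<lambda>_. borel) (\<lambda>i \<omega>. exp (\<beta> * X i \<omega>)) I"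
    by (rule indep_vars_compose2[OF indep]) measurable
  show "distr M borel (\<lambda>\<omega>. exp (\<beta> * X i \<omega>)) = distr M borel (\<lambda>\<omega>. exp (\<beta> * Z \<omega>))" if "i \<in> I" for i
  proof -
    have "random_variable borel (X i)"
      using indep that unfolding indep_vars_def by blast
    then show ?thesis
      using distr_comp_eq[OF ident[OF that], where f = "\<lambda>x. exp (\<beta> * x)" and L = borel]
      by (simp add: comp_def)
  qed
  show "AE \<omega> in M. exp (\<beta> * Z \<omega>) \<in> {exp (- \<beta> * (\<bar>R\<bar> + 1))..exp (\<beta> * (\<bar>R\<bar> + 1))}"
    using bounded
  proof eventually_elim
    case (elim \<omega>)
    then have "\<bar>\<beta> * Z \<omega>\<bar> \<le> \<beta> * (\<bar>R\<bar> + 1)"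
      using \<open>0 < \<beta>\<close> by (auto simp: abs_mult)
    then show ?case
      by auto
  qed
qed (use \<open>finite I\<close> in auto)

lemma rho_hat_centered:
  assumes "0 < n" "0 < m"
  shows "real n * rho_hat \<beta> X n \<omega> - real n * ((1 / \<beta>) * ln m)
           = real n / \<beta> * ln ((\<Sum>t<n. exp (\<beta> * X t \<omega>)) / (real n * m))"
proof -
  have "0 < (\<Sum>t<n. exp (\<beta> * X t \<omega>))"
    using assms(1) by (intro sum_pos) auto
  then have "ln ((1 / real n) * (\<Sum>t<n. exp (\<beta> * X t \<omega>))) - ln m
               = ln ((\<Sum>t<n. exp (\<beta> * X t \<omega>)) / (real n * m))"
    using assms by (simp add: ln_div ln_mult)
  moreover have "real n * rho_hat \<beta> X n \<omega> - real n * ((1 / \<beta>) * ln m)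
      = real n / \<beta> * (ln ((1 / real n) * (\<Sum>t<n. exp (\<beta> * X t \<omega>))) - ln m)"
    unfolding rho_hat_def by (simp add: algebra_simps)
  ultimately show ?thesis
    by simp
qed

lemma rho_hat_deviation_iff:
  assumes "0 < \<beta>" "0 < n" "0 < m"
  shows "sqrt n * z \<le> real n * rho_hat \<beta> X n \<omega> - real n * ((1 / \<beta>) * ln m)
           \<longleftrightarrow> \<beta> * z \<le> sqrt n * ln ((\<Sum>t<n. exp (\<beta> * X t \<omega>)) / (real n * m))"
    and "real n * rho_hat \<beta> X n \<omega> - real n * ((1 / \<beta>) * ln m) \<le> - (sqrt n * z)
           \<longleftrightarrow> sqrt n * ln ((\<Sum>t<n. exp (\<beta> * X t \<omega>)) / (real n * m)) \<le> - (\<beta> * z)"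
proof -
  define L where "L = ln ((\<Sum>t<n. exp (\<beta> * X t \<omega>)) / (real n * m))"
  have "real n * rho_hat \<beta> X n \<omega> - real n * ((1 / \<beta>) * ln m) = sqrt n * (sqrt n * L / \<beta>)"
    unfolding rho_hat_centered[OF assms(2,3)] L_def
    by (simp add: real_sqrt_mult_self flip: mult.assoc)
  moreover have "0 < sqrt n"
    using assms(2) by simp
  ultimately have "sqrt n * z \<le> real n * rho_hat \<beta> X n \<omega> - real n * ((1 / \<beta>) * ln m)
                     \<longleftrightarrow> z \<le> sqrt n * L / \<beta>"
    and "real n * rho_hat \<beta> X n \<omega> - real n * ((1 / \<beta>) * ln m) \<le> - (sqrt n * z)
           \<longleftrightarrow> sqrt n * L / \<beta> \<le> - z"
    by (metis mult_le_cancel_left_pos mult_minus_right)+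
  then show "sqrt n * z \<le> real n * rho_hat \<beta> X n \<omega> - real n * ((1 / \<beta>) * ln m)
               \<longleftrightarrow> \<beta> * z \<le> sqrt n * ln ((\<Sum>t<n. exp (\<beta> * X t \<omega>)) / (real n * m))"
    and "real n * rho_hat \<beta> X n \<omega> - real n * ((1 / \<beta>) * ln m) \<le> - (sqrt n * z)
           \<longleftrightarrow> sqrt n * ln ((\<Sum>t<n. exp (\<beta> * X t \<omega>)) / (real n * m)) \<le> - (\<beta> * z)"
    using assms(1) unfolding L_def by (simp_all add: pos_le_divide_eq pos_divide_le_eq mult.commute)
qed

lemma entropic_risk_estimator_deviation:
  fixes M :: "'a measure" and X :: "nat \<Rightarrow> 'a \<Rightarrow> real" and R \<beta> z :: real and n :: nat
  assumes "prob_space M"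
    and meas: "\<And>i. X i \<in> borel_measurable M"
    and indep: "prob_space.indep_vars M (\<lambda>_. borel) X UNIV"
    and ident: "\<And>i. distr M borel (X i) = distr M borel (X 0)"
    and bounded: "\<And>i \<omega>. \<omega> \<in> space M \<Longrightarrow> X i \<omega> \<in> {-R..R}"
    and "0 < \<beta>" "0 < n" "0 \<le> z"
  defines "\<mu> \<equiv> (1 / \<beta>) * ln (prob_space.expectation M (\<lambda>\<omega>. exp (\<beta> * X 0 \<omega>)))"
    and "a \<equiv> exp (- \<beta> * (\<bar>R\<bar> + 1))" and "b \<equiv> exp (\<beta> * (\<bar>R\<bar> + 1))"
  shows "measure M {\<omega> \<in> space M. real n * rho_hat \<beta> X n \<omega> - real n * \<mu> \<ge> sqrt n * z}
           \<le> exp (- 2 * a\<^sup>2 * (\<beta> * z)\<^sup>2 / (b - a)\<^sup>2)"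
    and "measure M {\<omega> \<in> space M. real n * rho_hat \<beta> X n \<omega> - real n * \<mu> \<le> - (sqrt n * z)}
           \<le> exp (- 2 * a\<^sup>2 * (\<beta> * z)\<^sup>2 / (b - a)\<^sup>2)"
proof -
  interpret P: prob_space M by fact
  define m where "m = P.expectation (\<lambda>\<omega>. exp (\<beta> * X 0 \<omega>))"
  have "iid_interval_bounded_random_variables M {..<n} (\<lambda>i \<omega>. exp (\<beta> * X i \<omega>))
          (\<lambda>\<omega>. exp (\<beta> * X 0 \<omega>)) a b"
    unfolding a_def b_def
  proof (rule P.iid_interval_bounded_exp)
    show "P.indep_vars (\<lambda>_. borel) X {..<n}"
      by (rule P.indep_vars_subset[OF indep]) auto
    show "AE \<omega> in M. X 0 \<omega> \<in> {-R..R}"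
      using bounded by simp
  qed (use ident meas \<open>0 < \<beta>\<close> in auto)
  then interpret H: Hoeffding_ineq_iid M "{..<n}" "\<lambda>i \<omega>. exp (\<beta> * X i \<omega>)"
      "\<lambda>\<omega>. exp (\<beta> * X 0 \<omega>)" a b m
    unfolding m_def by (simp add: Hoeffding_ineq_iid_def)
  \<comment> \<open>The margin \<open>+ 1\<close> in \<open>a\<close> and \<open>b\<close> keeps \<open>a < b\<close> when \<open>R = 0\<close>, as Hoeffding's inequality requires.\<close>
  have "0 < a" "a < b" "{..<n} \<noteq> {}" "0 \<le> \<beta> * z"
    using \<open>0 < \<beta>\<close> \<open>0 < n\<close> \<open>0 \<le> z\<close> by (auto simp: a_def b_def)
  then have "0 < m"
    using H.lower_le_expectation by linarith
  have \<mu>_m: "\<mu> = (1 / \<beta>) * ln m"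
    unfolding \<mu>_def m_def ..
  note deviation_iff = rho_hat_deviation_iff[OF \<open>0 < \<beta>\<close> \<open>0 < n\<close> \<open>0 < m\<close>]
  have "measure M {\<omega> \<in> space M. real n * rho_hat \<beta> X n \<omega> - real n * \<mu> \<ge> sqrt n * z}
      = measure M {\<omega> \<in> space M. \<beta> * z \<le> sqrt (card {..<n})
                     * ln ((\<Sum>i<n. exp (\<beta> * X i \<omega>)) / (card {..<n} * m))}"
    by (simp only: \<mu>_m deviation_iff card_lessThan)
  also have "\<dots> \<le> exp (- 2 * m\<^sup>2 * (\<beta> * z)\<^sup>2 / (b - a)\<^sup>2)"
    by (rule H.prob_ln_mean_ratio_ge) fact+
  also have "\<dots> \<le> exp (- 2 * a\<^sup>2 * (\<beta> * z)\<^sup>2 / (b - a)\<^sup>2)"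
    using \<open>0 < a\<close> H.lower_le_expectation
    by (simp add: divide_right_mono mult_right_mono power_mono)
  finally show "measure M {\<omega> \<in> space M. real n * rho_hat \<beta> X n \<omega> - real n * \<mu> \<ge> sqrt n * z}
      \<le> exp (- 2 * a\<^sup>2 * (\<beta> * z)\<^sup>2 / (b - a)\<^sup>2)" .
  have "measure M {\<omega> \<in> space M. real n * rho_hat \<beta> X n \<omega> - real n * \<mu> \<le> - (sqrt n * z)}
      = measure M {\<omega> \<in> space M. sqrt (card {..<n})
                     * ln ((\<Sum>i<n. exp (\<beta> * X i \<omega>)) / (card {..<n} * m)) \<le> - (\<beta> * z)}"
    by (simp only: \<mu>_m deviation_iff card_lessThan)
  also have "\<dots> \<le> exp (- 2 * a\<^sup>2 * (\<beta> * z)\<^sup>2 / (b - a)\<^sup>2)"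
    by (rule H.prob_ln_mean_ratio_le) fact+
  finally show "measure M {\<omega> \<in> space M. real n * rho_hat \<beta> X n \<omega> - real n * \<mu> \<le> - (sqrt n * z)}
      \<le> exp (- 2 * a\<^sup>2 * (\<beta> * z)\<^sup>2 / (b - a)\<^sup>2)" .
qed

theorem lemma9:
  fixes M :: "'a measure" and X :: "nat \<Rightarrow> 'a \<Rightarrow> real" and R \<beta> :: real
  assumes "prob_space M"
    and meas: "\<And>i. X i \<in> borel_measurable M"
    and indep: "prob_space.indep_vars M (\<lambda>_. borel) X UNIV"
    and ident: "\<And>i. distr M borel (X i) = distr M borel (X 0)"
    and bounded: "\<And>i \<omega>. \<omega> \<in> space M \<Longrightarrow> X i \<omega> \<in> {-R..R}"
    and "\<beta> > 0"
  defines "\<mu> \<equiv> (1 / \<beta>) * ln (prob_space.expectation M (\<lambda>\<omega>. exp (\<beta> * X 0 \<omega>)))"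
  shows "\<exists>\<theta> \<xi> \<eta> :: real. \<theta> > 1 \<and> \<xi> > 1 \<and> 1/2 \<le> \<eta> \<and> \<eta> < 1 \<and>
           (\<forall>z \<ge> 1. \<forall>n \<ge> 1.
              measure M {\<omega> \<in> space M. real n * rho_hat \<beta> X n \<omega> - real n * \<mu> \<ge> real n powr \<eta> * z}
                \<le> \<theta> / z powr \<xi> \<and>
              measure M {\<omega> \<in> space M. real n * rho_hat \<beta> X n \<omega> - real n * \<mu> \<le> - (real n powr \<eta> * z)}
                \<le> \<theta> / z powr \<xi>)"
proof -
  define a where "a = exp (- \<beta> * (\<bar>R\<bar> + 1))"
  define b where "b = exp (\<beta> * (\<bar>R\<bar> + 1))"
  define K where "K = 2 * a\<^sup>2 * \<beta>\<^sup>2 / (b - a)\<^sup>2"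
  have "0 < K"
    using \<open>\<beta> > 0\<close> by (simp add: K_def a_def b_def)
  have tail: "exp (- 2 * a\<^sup>2 * (\<beta> * z)\<^sup>2 / (b - a)\<^sup>2) \<le> (1 + 1 / K) / z powr 2" if "1 \<le> z" for z
  proof -
    have "exp (- 2 * a\<^sup>2 * (\<beta> * z)\<^sup>2 / (b - a)\<^sup>2) = exp (- (K * z\<^sup>2))"
      by (simp add: K_def power_mult_distrib)
    also have "\<dots> \<le> 1 / (K * z\<^sup>2)"
      using \<open>0 < K\<close> that by (intro exp_neg_le_inverse) simp
    also have "\<dots> = (1 / K) / z\<^sup>2"
      by simp
    also have "\<dots> \<le> (1 + 1 / K) / z\<^sup>2"
      by (intro divide_right_mono) simp_all
    finally show ?thesis
      using that by (simp add: powr_numeral)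
  qed
  show ?thesis
  proof (intro exI conjI allI impI)
    show "1 < 1 + 1 / K" "1 < (2::real)" "1 / 2 \<le> (1 / 2 :: real)" "1 / 2 < (1::real)"
      using \<open>0 < K\<close> by auto
    fix z :: real and n :: nat
    assume "1 \<le> z" "1 \<le> n"
    then show "measure M {\<omega> \<in> space M. real n * rho_hat \<beta> X n \<omega> - real n * \<mu> \<ge> real n powr (1 / 2) * z}
        \<le> (1 + 1 / K) / z powr 2"
      and "measure M {\<omega> \<in> space M. real n * rho_hat \<beta> X n \<omega> - real n * \<mu> \<le> - (real n powr (1 / 2) * z)}
        \<le> (1 + 1 / K) / z powr 2"
      using entropic_risk_estimator_deviation[OF assms(1-6), of n z] tail[OF \<open>1 \<le> z\<close>]
      unfolding \<mu>_def a_def b_def by (simp_all add: powr_half_sqrt)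
  qed
qed

end
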